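(* Let $n\ge4$, let $\sigma,\tau\in\Sigma_n$, let $\mathbf A\in\mathcal G_n$, and let $\mathbf X=D^\sigma(\mathbf A)$ and $\mathbf X'=D^\tau(\mathbf A)$ (both with underlying set $\mathcal G_n(\mathbf A,\mathbf C_n)$). Then (i) the relations $\simeq^\sigma_{\mathbf X}$ and $\simeq^\tau_{\mathbf X'}$ coincide; (ii) the relations $\le^\sigma_{\mathbf X}$ and $\le^\tau_{\mathbf X'}$ coincide. Moreover, for every $\sigma\in\Sigma_n$, $\le^\sigma_{\mathbf X}$ is a partial order on $X/{\simeq^\sigma_{\mathbf X}}$ of depth at most $n-2$, whose covering relation is $\prec^\sigma_{\mathbf X}$.
   Context: $\mathbf C_n$ is the Heyting algebra on the chain $\{0<1<\dots<n-1\}$, with min, max, $\bot=0$, $\top=n-1$, $a\to b=\top$ if $a\le b$, $a\to b=b$ if $b<a$. $\mathcal G_n$ is the class of algebras isomorphic to subalgebras of direct powers of $\mathbf C_n$; $\mathcal G_n(\mathbf A,\mathbf C_n)$ is the set of Heyting homomorphisms $\mathbf A\to\mathbf C_n$. For $n\ge4$: for $1\le i\le n-2$, $h_i$ is the endomorphism of $\mathbf C_n$ with $h_i(k)=k+1$ if $i\le k<n-1$ and $h_i(k)=k$ otherwise. For $1\le i\le n-3$, $g_i$ is the partial map with domain $C_n\setminus\{i\}$ with $g_i(i+1)=i$ and $g_i(k)=k$ for $k\notin\{i,i+1\}$, and $f_i\colon C_n\setminus\{i+1\}\to C_n\setminus\{i\}$ is its inverse. $\Sigma_n=\{f_1,g_1\}\times\dots\times\{f_{n-3},g_{n-3}\}\times\{h_1,\dots,h_{n-2}\}$,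 elements written $\sigma=(\sigma_1,\dots,\sigma_{n-2})$. $D^\sigma(\mathbf A)$ is the set $\mathcal G_n(\mathbf A,\mathbf C_n)$ (with the topology inherited from the product of discrete spaces $C_n^A$) equipped with the lifted (partial) operations $\sigma_i^{\mathbf X}(x)=\sigma_i\circ x$, defined iff $\operatorname{ran}x\subseteq\operatorname{dom}\sigma_i$. For such $\mathbf X$: $x\simeq^\sigma_{\mathbf X}y$ iff $x=y$ or there is a finite sequence $x=z_0,\dots,z_N=y$ in $X$ such that for each $j<N$ some $i_j\in\{1,\dots,n-3\}$ satisfies $z_{j+1}=\sigma_{i_j}^{\mathbf X}(z_j)$ or $z_j=\sigma_{i_j}^{\mathbf X}(z_{j+1})$; this is an equivalence relation, with classes $[x]$. On $X/{\simeq^\sigma_{\mathbf X}}$ define $[x]\prec^\sigma_{\mathbf X}[y]$ iff $x\not\simeq^\sigma_{\mathbf X}y$ and there exists $z\simeq^\sigma_{\mathbf X}x$ with $\sigma_{n-2}^{\mathbf X}(z)\simeq^\sigma_{\mathbf X}y$; $\le^\sigma_{\mathbf X}$ is the reflexive transitive closure of $\prec^\sigma_{\mathbf X}$. Depth: in a poset $P$ where no ${\uparrow}p$ contains an infinite ascending chain, $d(p)=\max\{|C|-1: C\subseteq{\uparrow}p \text{ a chain}\}$, and the depth of $P$ is $\sup_p d(p)$. *)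

theory Defs
  imports Main "HOL-Library.FuncSet"
begin

record 'a halg =
  hcarrier :: "'a set"
  hmeet :: "'a \<Rightarrow> 'a \<Rightarrow> 'a"
  hjoin :: "'a \<Rightarrow> 'a \<Rightarrow> 'a"
  himp :: "'a \<Rightarrow> 'a \<Rightarrow> 'a"
  hbot :: "'a"
  htop :: "'a"

definition is_halg :: "'a halg \<Rightarrow> bool" where
  "is_halg A \<longleftrightarrow> hbot A \<in> hcarrier A \<and> htop A \<in> hcarrier A \<and>
     (\<forall>a\<in>hcarrier A. \<forall>b\<in>hcarrier A.
        hmeet A a b \<in> hcarrier A \<and> hjoin A a b \<in> hcarrier A \<and> himp A a b \<in> hcarrier A)"

definition cimp :: "nat \<Rightarrow> nat \<Rightarrow> nat \<Rightarrow> nat" where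
  "cimp n a b = (if a \<le> b then n - 1 else b)"

definition is_hom :: "nat \<Rightarrow> 'a halg \<Rightarrow> ('a \<Rightarrow> nat) \<Rightarrow> bool" where
  "is_hom n A h \<longleftrightarrow>
     (\<forall>a\<in>hcarrier A. h a < n) \<and>
     h (hbot A) = 0 \<and> h (htop A) = n - 1 \<and>
     (\<forall>a\<in>hcarrier A. \<forall>b\<in>hcarrier A.
        h (hmeet A a b) = min (h a) (h b) \<and>
        h (hjoin A a b) = max (h a) (h b) \<and>
        h (himp A a b) = cimp n (h a) (h b))"

definition homs :: "nat \<Rightarrow> 'a halg \<Rightarrow> ('a \<Rightarrow> nat) set" where
  "homs n A = {h \<in> hcarrier A \<rightarrow>\<^sub>E {..<n}. is_hom n A h}"

text \<open>A \<in> G_n: A is isomorphic to a subalgebra of a direct power C_n^I, i.e.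
  there is an injective homomorphism A \<rightarrow> C_n^I, given by a family (e i)_{i\<in>I}
  of homomorphisms A \<rightarrow> C_n that separates points.\<close>
definition in_Gn :: "'i itself \<Rightarrow> nat \<Rightarrow> 'a halg \<Rightarrow> bool" where
  "in_Gn _ n A \<longleftrightarrow> is_halg A \<and>
     (\<exists>(I :: 'i set) (e :: 'i \<Rightarrow> 'a \<Rightarrow> nat).
        (\<forall>i\<in>I. is_hom n A (e i)) \<and>
        (\<forall>a\<in>hcarrier A. \<forall>b\<in>hcarrier A. a \<noteq> b \<longrightarrow> (\<exists>i\<in>I. e i a \<noteq> e i b)))"

definition hmap :: "nat \<Rightarrow> nat \<Rightarrow> nat \<Rightarrow> nat option" where
  "hmap n i k = (if k < n then Some (if i \<le> k \<and> k < n - 1 then k + 1 else k) else None)"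

definition gmap :: "nat \<Rightarrow> nat \<Rightarrow> nat \<Rightarrow> nat option" where
  "gmap n i k = (if k < n \<and> k \<noteq> i then Some (if k = i + 1 then i else k) else None)"

definition fmap :: "nat \<Rightarrow> nat \<Rightarrow> nat \<Rightarrow> nat option" where
  "fmap n i k = (if k < n \<and> k \<noteq> i + 1 then Some (if k = i then i + 1 else k) else None)"

text \<open>\<sigma> = (\<sigma>_1, ..., \<sigma>_{n-2}) represented as a function on indices; only
  indices 1..n-2 matter.\<close>
definition in_Sigma :: "nat \<Rightarrow> (nat \<Rightarrow> (nat \<Rightarrow> nat option)) \<Rightarrow> bool" where
  "in_Sigma n \<sigma> \<longleftrightarrow>
     (\<forall>i\<in>{1..n-3}. \<sigma> i = fmap n i \<or> \<sigma> i = gmap n i) \<and>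
     (\<exists>j\<in>{1..n-2}. \<sigma> (n - 2) = hmap n j)"

definition lift :: "'a halg \<Rightarrow> (nat \<Rightarrow> nat option) \<Rightarrow> ('a \<Rightarrow> nat) \<Rightarrow> ('a \<Rightarrow> nat) option" where
  "lift A s x = (if (\<forall>a\<in>hcarrier A. x a \<in> dom s)
                 then Some (\<lambda>a\<in>hcarrier A. the (s (x a))) else None)"

definition sstep :: "nat \<Rightarrow> 'a halg \<Rightarrow> (nat \<Rightarrow> (nat \<Rightarrow> nat option)) \<Rightarrow> (('a \<Rightarrow> nat) \<times> ('a \<Rightarrow> nat)) set" where
  "sstep n A \<sigma> = {(x, y). x \<in> homs n A \<and> y \<in> homs n A \<and>
      (\<exists>i\<in>{1..n-3}. lift A (\<sigma> i) x = Some y \<or> lift A (\<sigma> i) y = Some x)}"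

definition simeq :: "nat \<Rightarrow> 'a halg \<Rightarrow> (nat \<Rightarrow> (nat \<Rightarrow> nat option)) \<Rightarrow> (('a \<Rightarrow> nat) \<times> ('a \<Rightarrow> nat)) set" where
  "simeq n A \<sigma> = {(x, y). x \<in> homs n A \<and> y \<in> homs n A \<and> (x = y \<or> (x, y) \<in> (sstep n A \<sigma>)\<^sup>+)}"

definition classes :: "nat \<Rightarrow> 'a halg \<Rightarrow> (nat \<Rightarrow> (nat \<Rightarrow> nat option)) \<Rightarrow> ('a \<Rightarrow> nat) set set" where
  "classes n A \<sigma> = homs n A // simeq n A \<sigma>"

definition prec :: "nat \<Rightarrow> 'a halg \<Rightarrow> (nat \<Rightarrow> (nat \<Rightarrow> nat option)) \<Rightarrow> (('a \<Rightarrow> nat) set \<times> ('a \<Rightarrow> nat) set) set" where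
  "prec n A \<sigma> = {(c, d). c \<in> classes n A \<sigma> \<and> d \<in> classes n A \<sigma> \<and> c \<noteq> d \<and>
      (\<exists>z\<in>c. \<exists>w\<in>d. lift A (\<sigma> (n - 2)) z = Some w)}"

definition leq :: "nat \<Rightarrow> 'a halg \<Rightarrow> (nat \<Rightarrow> (nat \<Rightarrow> nat option)) \<Rightarrow> (('a \<Rightarrow> nat) set \<times> ('a \<Rightarrow> nat) set) set" where
  "leq n A \<sigma> = {(c, d). c \<in> classes n A \<sigma> \<and> d \<in> classes n A \<sigma> \<and> (c, d) \<in> (prec n A \<sigma>)\<^sup>*}"

definition covers :: "('b \<times> 'b) set \<Rightarrow> ('b \<times> 'b) set" where
  "covers r = {(c, d). (c, d) \<in> r \<and> c \<noteq> d \<and>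
      \<not> (\<exists>e. (c, e) \<in> r \<and> (e, d) \<in> r \<and> e \<noteq> c \<and> e \<noteq> d)}"

definition depth_le :: "'b set \<Rightarrow> ('b \<times> 'b) set \<Rightarrow> nat \<Rightarrow> bool" where
  "depth_le P r k \<longleftrightarrow>
     (\<forall>p\<in>P. \<not> (\<exists>f :: nat \<Rightarrow> 'b. f 0 = p \<and> (\<forall>m. (f m, f (Suc m)) \<in> r \<and> f m \<noteq> f (Suc m)))) \<and>
     (\<forall>p\<in>P. \<forall>C. C \<subseteq> {q \<in> P. (p, q) \<in> r} \<and> (\<forall>a\<in>C. \<forall>b\<in>C. (a, b) \<in> r \<or> (b, a) \<in> r)
         \<longrightarrow> finite C \<and> card C - 1 \<le> k)"

end

theory Submission
  imports Defs
begin

text \<open>Write ran x for the range of x. The lifted f_i and g_i preserve the preorder that x induces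
  on A, and repeatedly applying some g_i to close a gap in ran x below n - 2 reaches a canonical
  representative depending only on that preorder; hence x \<simeq> y iff x and y induce the same
  preorder on A, independently of \<sigma>. The lifted h_j for different j give order-equivalent results,
  so \<prec> is independent of \<sigma> as well. Since h_j merges n - 2 with n - 1 and is injective
  otherwise, |ran x| is constant on classes and drops by exactly one along \<prec>. A relation graded
  by such a rank with values in {2..n} has as reflexive transitive closure a partial order of depth
  at most n - 2 whose covering relation is the relation itself.\<close>

locale graded_relation =
  fixes r :: "('b \<times> 'b) set" and f :: "'b \<Rightarrow> nat"
  assumes grade: "(c, d) \<in> r \<Longrightarrow> f c = Suc (f d)"
begin

lemma rtrancl_cases:
  assumes "(c, d) \<in> r\<^sup>*"
  shows "c = d \<or> f d < f c"
  using assms by (induction rule: rtrancl_induct) (auto dest: grade)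

lemma partial_order_on_rtrancl:
  "partial_order_on P {(c, d). c \<in> P \<and> d \<in> P \<and> (c, d) \<in> r\<^sup>*}"
proof -
  have "antisym {(c, d). c \<in> P \<and> d \<in> P \<and> (c, d) \<in> r\<^sup>*}"
  proof (rule antisymI, clarify)
    fix c d assume "(c, d) \<in> r\<^sup>*" "(d, c) \<in> r\<^sup>*"
    then show "c = d" using rtrancl_cases less_asym by metis
  qed
  then show ?thesis
    unfolding partial_order_on_def preorder_on_def refl_on_def trans_def
    by (auto intro: rtrancl_trans)
qed

lemma covers_rtrancl:
  assumes "r \<subseteq> P \<times> P"
  shows "covers {(c, d). c \<in> P \<and> d \<in> P \<and> (c, d) \<in> r\<^sup>*} = r"
proof (intro equalityI subsetI, clarify)
  fix c d assume cd: "(c, d) \<in> covers {(c, d). c \<in> P \<and> d \<in> P \<and> (c, d) \<in> r\<^sup>*}"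
  then have "(c, d) \<in> r\<^sup>*" "c \<noteq> d" "d \<in> P" unfolding covers_def by auto
  then obtain e where ce: "(c, e) \<in> r" and ed: "(e, d) \<in> r\<^sup>*"
    by (metis converse_rtranclE)
  have "e \<in> P" "c \<noteq> e" using ce assms grade by fastforce+
  then have "e = d" using cd ce ed \<open>d \<in> P\<close> unfolding covers_def by blast
  then show "(c, d) \<in> r" using ce by simp
next
  fix q assume q: "q \<in> r"
  then obtain c d where cd: "q = (c, d)" "(c, d) \<in> r" by (cases q) auto
  have "\<not> (e \<noteq> c \<and> e \<noteq> d)" if "(c, e) \<in> r\<^sup>*" "(e, d) \<in> r\<^sup>*" for e
    using rtrancl_cases[OF that(1)] rtrancl_cases[OF that(2)] grade[OF cd(2)] by auto
  then show "q \<in> covers {(c, d). c \<in> P \<and> d \<in> P \<and> (c, d) \<in> r\<^sup>*}"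
    using cd assms grade[OF cd(2)] unfolding covers_def by fastforce
qed

lemma depth_le_rtrancl:
  assumes "f ` P \<subseteq> {a..b}"
  shows "depth_le P {(c, d). c \<in> P \<and> d \<in> P \<and> (c, d) \<in> r\<^sup>*} (b - a)"
  unfolding depth_le_def
proof (intro conjI ballI allI impI notI)
  fix p assume "\<exists>g. g 0 = p \<and> (\<forall>m. (g m, g (Suc m)) \<in> {(c, d). c \<in> P \<and> d \<in> P \<and> (c, d) \<in> r\<^sup>*}
      \<and> g m \<noteq> g (Suc m))"
  then obtain g where g: "\<And>m. (g m, g (Suc m)) \<in> r\<^sup>*" "\<And>m. g m \<noteq> g (Suc m)" by blast
  have "f (g m) + m \<le> f (g 0)" for m
  proof (induction m)
    case (Suc m)
    then show ?case using rtrancl_cases[OF g(1)[of m]] g(2)[of m] by auto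
  qed simp
  from this[of "Suc (f (g 0))"] show False by simp
next
  fix p C assume C: "C \<subseteq> {q \<in> P. (p, q) \<in> {(c, d). c \<in> P \<and> d \<in> P \<and> (c, d) \<in> r\<^sup>*}} \<and>
    (\<forall>c\<in>C. \<forall>d\<in>C. (c, d) \<in> {(c, d). c \<in> P \<and> d \<in> P \<and> (c, d) \<in> r\<^sup>*} \<or>
                    (d, c) \<in> {(c, d). c \<in> P \<and> d \<in> P \<and> (c, d) \<in> r\<^sup>*})"
  have inj: "inj_on f C"
    by (rule inj_onI) (use C rtrancl_cases in fastforce)
  have im: "f ` C \<subseteq> {a..b}" using C assms by blast
  show "finite C" using finite_subset[OF im] inj by (simp add: finite_image_iff)
  have "card C \<le> card {a..b}" using card_mono[OF _ im] card_image[OF inj] by simp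
  then show "card C - 1 \<le> b - a" by simp
qed

end

lemma homsD:
  assumes "x \<in> homs n A"
  shows "x \<in> extensional (hcarrier A)" "\<And>a. a \<in> hcarrier A \<Longrightarrow> x a < n" "is_hom n A x"
  using assms unfolding homs_def by (auto simp: PiE_def)

lemma homs_bot_top:
  assumes "x \<in> homs n A" "is_halg A"
  shows "hbot A \<in> hcarrier A" "htop A \<in> hcarrier A" "x (hbot A) = 0" "x (htop A) = n - 1"
  using assms homsD(3)[OF assms(1)] unfolding is_halg_def is_hom_def by auto

lemma bot_top_in_range:
  assumes "x \<in> homs n A" "is_halg A"
  shows "0 \<in> x ` hcarrier A" "n - 1 \<in> x ` hcarrier A"
  using homs_bot_top[OF assms] by (metis image_eqI)+

lemma finite_image_homs: "x \<in> homs n A \<Longrightarrow> finite (x ` hcarrier A)"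
  using homsD(2) by (metis finite_lessThan finite_subset image_subsetI lessThan_iff)

lemma lift_gmap:
  "lift A (gmap n i) x = (if \<forall>a\<in>hcarrier A. x a < n \<and> x a \<noteq> i
     then Some (\<lambda>a\<in>hcarrier A. if x a = i + 1 then i else x a) else None)"
  unfolding lift_def gmap_def dom_def by (auto intro!: restrict_ext)

lemma lift_fmap:
  "lift A (fmap n i) x = (if \<forall>a\<in>hcarrier A. x a < n \<and> x a \<noteq> i + 1
     then Some (\<lambda>a\<in>hcarrier A. if x a = i then i + 1 else x a) else None)"
  unfolding lift_def fmap_def dom_def by (auto intro!: restrict_ext)

lemma lift_fmap_eq_Some_iff:
  assumes x: "x \<in> homs n A" and y: "y \<in> homs n A"
  shows "lift A (fmap n i) x = Some y \<longleftrightarrow> lift A (gmap n i) y = Some x"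
proof
  assume "lift A (fmap n i) x = Some y"
  then have y_def: "y = (\<lambda>a\<in>hcarrier A. if x a = i then i + 1 else x a)"
    and x_range: "\<forall>a\<in>hcarrier A. x a < n \<and> x a \<noteq> i + 1"
    unfolding lift_fmap by (auto split: if_splits)
  have "(\<lambda>a\<in>hcarrier A. if y a = i + 1 then i else y a) = x"
    using homsD(1)[OF x] x_range unfolding y_def by (auto simp: extensional_def fun_eq_iff)
  then show "lift A (gmap n i) y = Some x"
    using x_range homsD(2)[OF y] unfolding lift_gmap y_def by auto
next
  assume "lift A (gmap n i) y = Some x"
  then have x_def: "x = (\<lambda>a\<in>hcarrier A. if y a = i + 1 then i else y a)"
    and y_range: "\<forall>a\<in>hcarrier A. y a < n \<and> y a \<noteq> i"
    unfolding lift_gmap by (auto split: if_splits)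
  have "(\<lambda>a\<in>hcarrier A. if x a = i then i + 1 else x a) = y"
    using homsD(1)[OF y] y_range unfolding x_def by (auto simp: extensional_def fun_eq_iff)
  then show "lift A (fmap n i) x = Some y"
    using y_range homsD(2)[OF x] unfolding lift_fmap x_def by auto
qed

text \<open>The hypothesis strict is what makes \<phi> commute with the implication of C_n.\<close>

lemma homs_comp:
  assumes x: "x \<in> homs n A" and A: "is_halg A"
    and range: "\<forall>u\<in>x ` hcarrier A. \<phi> u < n" and bot: "\<phi> 0 = 0" and top: "\<phi> (n - 1) = n - 1"
    and mono: "\<forall>u\<in>x ` hcarrier A. \<forall>v\<in>x ` hcarrier A. u \<le> v \<longrightarrow> \<phi> u \<le> \<phi> v"
    and strict: "\<forall>u\<in>x ` hcarrier A. \<forall>v\<in>x ` hcarrier A. v < u \<longrightarrow> \<phi> v < \<phi> u \<or> \<phi> v = n - 1"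
  shows "(\<lambda>a\<in>hcarrier A. \<phi> (x a)) \<in> homs n A"
proof -
  let ?y = "\<lambda>a\<in>hcarrier A. \<phi> (x a)"
  have hom: "is_hom n A x" using homsD[OF x] by auto
  have closed: "hmeet A a b \<in> hcarrier A" "hjoin A a b \<in> hcarrier A" "himp A a b \<in> hcarrier A"
    if "a \<in> hcarrier A" "b \<in> hcarrier A" for a b
    using A that unfolding is_halg_def by auto
  have "is_hom n A ?y"
    unfolding is_hom_def
  proof (intro conjI ballI)
    show "?y a < n" if "a \<in> hcarrier A" for a using range that by auto
    show "?y (hbot A) = 0" "?y (htop A) = n - 1" using homs_bot_top[OF x A] bot top by auto
    fix a b assume a: "a \<in> hcarrier A" and b: "b \<in> hcarrier A"
    have xab: "x a \<in> x ` hcarrier A" "x b \<in> x ` hcarrier A" using a b by auto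
    show "?y (hmeet A a b) = min (?y a) (?y b)" "?y (hjoin A a b) = max (?y a) (?y b)"
      using closed[OF a b] hom a b mono xab unfolding is_hom_def
      by (auto simp: min_def max_def intro: le_antisym)
    have "\<phi> (cimp n (x a) (x b)) = cimp n (\<phi> (x a)) (\<phi> (x b))"
      using mono strict xab top unfolding cimp_def by (smt (verit) leD le_refl linorder_not_le)
    then show "?y (himp A a b) = cimp n (?y a) (?y b)"
      using closed[OF a b] hom a b unfolding is_hom_def by auto
  qed
  then show ?thesis unfolding homs_def using range by auto
qed

definition same_order :: "'a halg \<Rightarrow> ('a \<Rightarrow> nat) \<Rightarrow> ('a \<Rightarrow> nat) \<Rightarrow> bool" where
  "same_order A x y \<longleftrightarrow> (\<forall>a\<in>hcarrier A. \<forall>b\<in>hcarrier A. x a \<le> x b \<longleftrightarrow> y a \<le> y b)"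

lemma same_order_refl: "same_order A x x"
  and same_order_sym: "same_order A x y \<Longrightarrow> same_order A y x"
  and same_order_trans: "same_order A x y \<Longrightarrow> same_order A y z \<Longrightarrow> same_order A x z"
  unfolding same_order_def by auto

lemma same_order_eq_iff:
  "same_order A x y \<Longrightarrow> a \<in> hcarrier A \<Longrightarrow> b \<in> hcarrier A \<Longrightarrow> x a = x b \<longleftrightarrow> y a = y b"
  unfolding same_order_def by (metis order_antisym order_refl)

lemma lift_fmap_same_order: "lift A (fmap n i) x = Some y \<Longrightarrow> same_order A x y"
  and lift_gmap_same_order: "lift A (gmap n i) x = Some y \<Longrightarrow> same_order A x y"
  unfolding lift_fmap lift_gmap same_order_def by (auto split: if_splits)

lemma sstep_same_order:
  assumes "in_Sigma n \<sigma>" "(x, y) \<in> sstep n A \<sigma>"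
  shows "same_order A x y"
proof -
  obtain i where i: "i \<in> {1..n-3}" "lift A (\<sigma> i) x = Some y \<or> lift A (\<sigma> i) y = Some x"
    using assms(2) unfolding sstep_def by auto
  then have "\<sigma> i = fmap n i \<or> \<sigma> i = gmap n i" using assms(1) unfolding in_Sigma_def by auto
  with i(2) show ?thesis
    using lift_fmap_same_order lift_gmap_same_order same_order_sym by metis
qed

lemma rtrancl_sstep_same_order:
  assumes "in_Sigma n \<sigma>" "(x, y) \<in> (sstep n A \<sigma>)\<^sup>*"
  shows "same_order A x y"
  using assms(2)
proof (induction rule: rtrancl_induct)
  case (step y z)
  then show ?case using sstep_same_order[OF assms(1)] same_order_trans by blast
qed (rule same_order_refl)

lemma simeq_eq_rtrancl: "simeq n A \<sigma> = (sstep n A \<sigma>)\<^sup>* \<inter> homs n A \<times> homs n A"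
  unfolding simeq_def by (auto simp: rtrancl_eq_or_trancl)

lemma sym_sstep: "sym (sstep n A \<sigma>)"
  unfolding sstep_def sym_def by auto

lemma sstep_gmap:
  assumes x: "x \<in> homs n A" and A: "is_halg A" and \<sigma>: "in_Sigma n \<sigma>"
    and i: "i \<in> {1..n-3}" and avoid: "\<forall>a\<in>hcarrier A. x a \<noteq> i"
  shows "(x, \<lambda>a\<in>hcarrier A. if x a = i + 1 then i else x a) \<in> sstep n A \<sigma>"
proof -
  define \<phi> where "\<phi> k = (if k = i + 1 then i else k)" for k
  let ?y = "\<lambda>a\<in>hcarrier A. \<phi> (x a)"
  have y: "?y \<in> homs n A"
    by (rule homs_comp[OF x A]) (use i avoid homsD(2)[OF x] in \<open>auto simp: \<phi>_def\<close>)
  have "lift A (gmap n i) x = Some ?y"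
    using avoid homsD(2)[OF x] unfolding lift_gmap \<phi>_def by auto
  moreover have "\<sigma> i = fmap n i \<or> \<sigma> i = gmap n i" using \<sigma> i unfolding in_Sigma_def by auto
  ultimately have "lift A (\<sigma> i) x = Some ?y \<or> lift A (\<sigma> i) ?y = Some x"
    using lift_fmap_eq_Some_iff[OF y x] by auto
  then have "(x, ?y) \<in> sstep n A \<sigma>" unfolding sstep_def using x y i by auto
  then show ?thesis by (simp add: \<phi>_def)
qed

lemma card_image_eq_if_same_kernel:
  assumes kernel: "\<forall>a\<in>T. \<forall>b\<in>T. x a = x b \<longleftrightarrow> y a = y b"
  shows "card (x ` T) = card (y ` T)"
proof -
  let ?g = "\<lambda>v. y (inv_into T x v)"
  have g: "?g (x b) = y b" if "b \<in> T" for b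
    using kernel that inv_into_into[of "x b" x T] f_inv_into_f[of "x b" x T] by auto
  then have "?g ` x ` T = y ` T" by (force simp: image_image)
  moreover have "inj_on ?g (x ` T)"
    using g kernel by (auto simp: inj_on_def)
  ultimately show ?thesis by (metis card_image)
qed

text \<open>A canonical representative of the \<simeq>-class of x: it depends only on the order type of x.\<close>

definition compress :: "nat \<Rightarrow> 'a halg \<Rightarrow> ('a \<Rightarrow> nat) \<Rightarrow> ('a \<Rightarrow> nat)" where
  "compress n A x =
     (\<lambda>a\<in>hcarrier A. if x a = n - 1 then n - 1 else card {u \<in> x ` hcarrier A. u < x a})"

lemma compress_eq_if_same_order:
  assumes x: "x \<in> homs n A" and y: "y \<in> homs n A" and xy: "same_order A x y" and A: "is_halg A"
  shows "compress n A x = compress n A y"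
proof -
  have top: "x a = n - 1 \<longleftrightarrow> y a = n - 1" if a: "a \<in> hcarrier A" for a
  proof -
    have "x a = n - 1 \<longleftrightarrow> x (htop A) \<le> x a" "y a = n - 1 \<longleftrightarrow> y (htop A) \<le> y a"
      using homsD(2)[OF x a] homsD(2)[OF y a] homs_bot_top[OF x A] homs_bot_top[OF y A] by auto
    then show ?thesis using xy a homs_bot_top[OF x A] unfolding same_order_def by blast
  qed
  have below: "card {u \<in> x ` hcarrier A. u < x a} = card {u \<in> y ` hcarrier A. u < y a}"
    if a: "a \<in> hcarrier A" for a
  proof -
    let ?T = "{b \<in> hcarrier A. x b < x a}"
    have "?T = {b \<in> hcarrier A. y b < y a}"
      using xy a unfolding same_order_def by (metis not_le)
    then have "{u \<in> x ` hcarrier A. u < x a} = x ` ?T" "{u \<in> y ` hcarrier A. u < y a} = y ` ?T"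
      by auto
    then show ?thesis
      using card_image_eq_if_same_kernel[of ?T x y] same_order_eq_iff[OF xy] by simp
  qed
  show ?thesis unfolding compress_def using top below by (auto intro!: restrict_ext)
qed

lemma atMost_subset_if_pred_closed:
  assumes pred: "\<forall>u\<in>S. 0 < u \<and> u \<le> m \<longrightarrow> u - 1 \<in> S" and "v \<in> S" "v \<le> (m::nat)"
  shows "{..v} \<subseteq> S"
proof
  have down: "v - k \<in> S" for k
  proof (induction k)
    case (Suc k)
    show ?case
    proof (cases "v - k = 0")
      case False
      then have "v - k - 1 \<in> S" using pred Suc.IH \<open>v \<le> m\<close> by auto
      then show ?thesis by simp
    qed (use Suc.IH in simp)
  qed (use \<open>v \<in> S\<close> in simp)
  fix u assume "u \<in> {..v}"
  then have "u = v - (v - u)" by simp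
  then show "u \<in> S" using down by metis
qed

lemma compress_eq_self:
  assumes x: "x \<in> homs n A" and A: "is_halg A"
    and no_gap: "\<forall>v\<in>x ` hcarrier A. 2 \<le> v \<and> v \<le> n - 2 \<longrightarrow> v - 1 \<in> x ` hcarrier A"
  shows "compress n A x = x"
proof
  fix a
  show "compress n A x a = x a"
  proof (cases "a \<in> hcarrier A \<and> x a \<noteq> n - 1")
    case True
    note bot_top_in_range(1)[OF x A]
    then have "\<forall>u\<in>x ` hcarrier A. 0 < u \<and> u \<le> n - 2 \<longrightarrow> u - 1 \<in> x ` hcarrier A"
    proof (intro ballI impI)
      fix u assume "u \<in> x ` hcarrier A" "0 < u \<and> u \<le> n - 2"
      then show "u - 1 \<in> x ` hcarrier A"
        using no_gap \<open>0 \<in> x ` hcarrier A\<close> by (cases "u = 1") auto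
    qed
    moreover have "x a \<le> n - 2" using True homsD(2)[OF x, of a] by auto
    ultimately have "{..x a} \<subseteq> x ` hcarrier A"
      using True by (intro atMost_subset_if_pred_closed) auto
    then have "{u \<in> x ` hcarrier A. u < x a} = {..<x a}" by auto
    then show ?thesis using True unfolding compress_def by simp
  qed (use homsD(1)[OF x] in \<open>auto simp: compress_def extensional_def\<close>)
qed

text \<open>The witness is g_{v-1}(x), which lowers the value v to v - 1.\<close>

lemma sstep_fill_gap:
  assumes x: "x \<in> homs n A" and A: "is_halg A" and \<sigma>: "in_Sigma n \<sigma>"
    and v: "v \<in> x ` hcarrier A" "2 \<le> v" "v \<le> n - 2" "v - 1 \<notin> x ` hcarrier A"
  obtains y where "(x, y) \<in> sstep n A \<sigma>" "\<Sum>(y ` hcarrier A) < \<Sum>(x ` hcarrier A)"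
proof -
  define \<phi> where "\<phi> k = (if k = v then v - 1 else k)" for k
  let ?y = "\<lambda>a\<in>hcarrier A. \<phi> (x a)"
  have "v - 1 \<in> {1..n-3}" "v - 1 + 1 = v" using v by auto
  moreover have "\<forall>a\<in>hcarrier A. x a \<noteq> v - 1" using v(4) by (metis imageI)
  ultimately have step: "(x, ?y) \<in> sstep n A \<sigma>"
    using sstep_gmap[OF x A \<sigma>, of "v - 1"] unfolding \<phi>_def by simp
  have "inj_on \<phi> (x ` hcarrier A)"
    using v(4) unfolding \<phi>_def inj_on_def by (auto simp: image_iff)
  then have "\<Sum>(?y ` hcarrier A) = (\<Sum>u\<in>x ` hcarrier A. \<phi> u)"
    by (simp add: sum.reindex image_image[symmetric])
  also have "\<dots> < \<Sum>(x ` hcarrier A)"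
    using v finite_image_homs[OF x] unfolding \<phi>_def
    by (intro sum_strict_mono_ex1) (auto intro!: bexI[of _ v])
  finally show ?thesis using that step by blast
qed

lemma rtrancl_sstep_compress:
  assumes A: "is_halg A" and \<sigma>: "in_Sigma n \<sigma>"
  shows "x \<in> homs n A \<Longrightarrow> (x, compress n A x) \<in> (sstep n A \<sigma>)\<^sup>*"
proof (induction "\<Sum>(x ` hcarrier A)" arbitrary: x rule: less_induct)
  case less
  show ?case
  proof (cases "\<exists>v\<in>x ` hcarrier A. 2 \<le> v \<and> v \<le> n - 2 \<and> v - 1 \<notin> x ` hcarrier A")
    case True
    then obtain y where step: "(x, y) \<in> sstep n A \<sigma>"
      and smaller: "\<Sum>(y ` hcarrier A) < \<Sum>(x ` hcarrier A)"
      using sstep_fill_gap[OF less.prems A \<sigma>] by blast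
    have y: "y \<in> homs n A" using step unfolding sstep_def by auto
    have "compress n A y = compress n A x"
      using compress_eq_if_same_order[OF y less.prems _ A] sstep_same_order[OF \<sigma> step]
        same_order_sym by blast
    then show ?thesis using less.hyps[OF smaller y] step by (metis converse_rtrancl_into_rtrancl)
  next
    case False
    then show ?thesis using compress_eq_self[OF less.prems A] by auto
  qed
qed

lemma simeq_eq_same_order:
  assumes A: "is_halg A" and \<sigma>: "in_Sigma n \<sigma>"
  shows "simeq n A \<sigma> = {(x, y). x \<in> homs n A \<and> y \<in> homs n A \<and> same_order A x y}"
proof -
  have "(x, y) \<in> (sstep n A \<sigma>)\<^sup>*"
    if x: "x \<in> homs n A" and y: "y \<in> homs n A" and xy: "same_order A x y" for x y
  proof -
    have "(compress n A y, y) \<in> (sstep n A \<sigma>)\<^sup>*"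
      by (rule symD[OF sym_rtrancl[OF sym_sstep] rtrancl_sstep_compress[OF A \<sigma> y]])
    then show ?thesis
      using rtrancl_sstep_compress[OF A \<sigma> x] compress_eq_if_same_order[OF x y xy A]
      by (metis rtrancl_trans)
  qed
  then show ?thesis
    unfolding simeq_eq_rtrancl using rtrancl_sstep_same_order[OF \<sigma>] by blast
qed

definition hval :: "nat \<Rightarrow> nat \<Rightarrow> nat \<Rightarrow> nat" where
  "hval n j k = (if j \<le> k \<and> k < n - 1 then k + 1 else k)"

lemma hval_le_iff:
  assumes "j \<in> {1..n-2}" "u < n" "v < n"
  shows "hval n j u \<le> hval n j v \<longleftrightarrow> u \<le> v \<or> n - 2 \<le> v"
  using assms unfolding hval_def by auto

lemma hval_simps:
  assumes "j \<in> {1..n-2}" "n \<ge> 4"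
  shows "hval n j 0 = 0" "hval n j (n - 1) = n - 1" "u < n \<Longrightarrow> hval n j u < n"
    "n - 2 \<le> u \<Longrightarrow> u < n \<Longrightarrow> hval n j u = n - 1"
  using assms unfolding hval_def by auto

lemma lift_hmap_homs:
  "z \<in> homs n A \<Longrightarrow> lift A (hmap n j) z = Some (\<lambda>a\<in>hcarrier A. hval n j (z a))"
  using homsD(2) unfolding lift_def hmap_def hval_def dom_def by (auto intro!: restrict_ext)

lemma homs_hval:
  assumes z: "z \<in> homs n A" and A: "is_halg A" and j: "j \<in> {1..n-2}" and n: "n \<ge> 4"
  shows "(\<lambda>a\<in>hcarrier A. hval n j (z a)) \<in> homs n A"
proof (rule homs_comp[OF z A])
  have z_range: "\<forall>u\<in>z ` hcarrier A. u < n" using homsD(2)[OF z] by blast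
  then show "\<forall>u\<in>z ` hcarrier A. hval n j u < n" using hval_simps[OF j n] by blast
  show "hval n j 0 = 0" "hval n j (n - 1) = n - 1" using hval_simps[OF j n] by auto
  show "\<forall>u\<in>z ` hcarrier A. \<forall>v\<in>z ` hcarrier A. u \<le> v \<longrightarrow> hval n j u \<le> hval n j v"
    using z_range hval_le_iff[OF j] by blast
  show "\<forall>u\<in>z ` hcarrier A. \<forall>v\<in>z ` hcarrier A. v < u \<longrightarrow> hval n j v < hval n j u \<or> hval n j v = n - 1"
    using z_range hval_le_iff[OF j] hval_simps(4)[OF j n] by (metis not_le)
qed

lemma same_order_hval:
  assumes "z \<in> homs n A" "j \<in> {1..n-2}" "j' \<in> {1..n-2}"
  shows "same_order A (\<lambda>a\<in>hcarrier A. hval n j (z a)) (\<lambda>a\<in>hcarrier A. hval n j' (z a))"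
  unfolding same_order_def
  using hval_le_iff[OF assms(2)] hval_le_iff[OF assms(3)] homsD(2)[OF assms(1)] by simp

definition order_class :: "nat \<Rightarrow> 'a halg \<Rightarrow> ('a \<Rightarrow> nat) \<Rightarrow> ('a \<Rightarrow> nat) set" where
  "order_class n A x = {y \<in> homs n A. same_order A x y}"

lemma classes_eq_order_classes:
  "is_halg A \<Longrightarrow> in_Sigma n \<sigma> \<Longrightarrow> classes n A \<sigma> = order_class n A ` homs n A"
  unfolding classes_def quotient_def simeq_eq_same_order order_class_def by auto

lemma classes_indep:
  "is_halg A \<Longrightarrow> in_Sigma n \<sigma> \<Longrightarrow> in_Sigma n \<tau> \<Longrightarrow> classes n A \<sigma> = classes n A \<tau>"
  using classes_eq_order_classes by metis

lemma mem_classesD: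
  assumes A: "is_halg A" and \<sigma>: "in_Sigma n \<sigma>" and c: "c \<in> classes n A \<sigma>" and x: "x \<in> c"
  shows "x \<in> homs n A" "c = order_class n A x"
proof -
  obtain x0 where c_def: "c = order_class n A x0"
    using c classes_eq_order_classes[OF A \<sigma>] by blast
  then have "x \<in> homs n A" "same_order A x0 x" using x unfolding order_class_def by auto
  moreover from this(2) have "order_class n A x0 = order_class n A x"
    unfolding order_class_def by (meson same_order_sym same_order_trans)
  ultimately show "x \<in> homs n A" "c = order_class n A x" using c_def by auto
qed

lemma classes_nonempty:
  assumes A: "is_halg A" and \<sigma>: "in_Sigma n \<sigma>" and c: "c \<in> classes n A \<sigma>"
  obtains x where "x \<in> c"
proof -
  obtain x0 where "x0 \<in> homs n A" "c = order_class n A x0"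
    using c classes_eq_order_classes[OF A \<sigma>] by blast
  then show ?thesis using that same_order_refl unfolding order_class_def by blast
qed

lemma prec_subset:
  assumes A: "is_halg A" and \<sigma>: "in_Sigma n \<sigma>" and \<tau>: "in_Sigma n \<tau>" and n: "n \<ge> 4"
  shows "prec n A \<sigma> \<subseteq> prec n A \<tau>"
proof clarify
  fix c d assume cd: "(c, d) \<in> prec n A \<sigma>"
  then obtain z w where zw: "z \<in> c" "w \<in> d" "lift A (\<sigma> (n - 2)) z = Some w"
    and cls: "c \<in> classes n A \<sigma>" "d \<in> classes n A \<sigma>" "c \<noteq> d"
    unfolding prec_def by blast
  obtain j j' where j: "j \<in> {1..n-2}" "\<sigma> (n - 2) = hmap n j"
    and j': "j' \<in> {1..n-2}" "\<tau> (n - 2) = hmap n j'"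
    using \<sigma> \<tau> unfolding in_Sigma_def by blast
  have z: "z \<in> homs n A" using mem_classesD[OF A \<sigma> cls(1) zw(1)] by blast
  let ?w' = "\<lambda>a\<in>hcarrier A. hval n j' (z a)"
  have "w = (\<lambda>a\<in>hcarrier A. hval n j (z a))" using zw(3) j(2) lift_hmap_homs[OF z] by simp
  then have "same_order A w ?w'" using same_order_hval[OF z j(1) j'(1)] by simp
  then have "?w' \<in> d"
    using mem_classesD[OF A \<sigma> cls(2) zw(2)] homs_hval[OF z A j'(1) n]
    unfolding order_class_def by blast
  moreover have "lift A (\<tau> (n - 2)) z = Some ?w'" using lift_hmap_homs[OF z] j'(2) by simp
  ultimately show "(c, d) \<in> prec n A \<tau>"
    using zw cls classes_indep[OF A \<sigma> \<tau>] unfolding prec_def by blast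
qed

definition ran_card :: "'a halg \<Rightarrow> ('a \<Rightarrow> nat) \<Rightarrow> nat" where
  "ran_card A x = card (x ` hcarrier A)"

lemma ran_card_eq_if_same_order:
  assumes "same_order A x y"
  shows "ran_card A x = ran_card A y"
  unfolding ran_card_def
  by (rule card_image_eq_if_same_kernel) (simp add: same_order_eq_iff[OF assms])

lemma ran_card_bounds:
  assumes x: "x \<in> homs n A" and A: "is_halg A" and n: "n \<ge> 4"
  shows "2 \<le> ran_card A x" "ran_card A x \<le> n"
proof -
  have range: "x ` hcarrier A \<subseteq> {..<n}" using homsD(2)[OF x] by blast
  then show "ran_card A x \<le> n" unfolding ran_card_def using card_mono[OF _ range] by simp
  have "{0, n - 1} \<subseteq> x ` hcarrier A" using bot_top_in_range[OF x A] by simp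
  then have "card {0, n - 1} \<le> ran_card A x"
    unfolding ran_card_def by (rule card_mono[OF finite_image_homs[OF x]])
  then show "2 \<le> ran_card A x" using n by simp
qed

text \<open>h_j merges the values n - 2 and n - 1 and is injective on all other values, so it
  either preserves the order type of x or lowers the size of its range by exactly one.\<close>

lemma same_order_hval_self:
  assumes z: "z \<in> homs n A" and j: "j \<in> {1..n-2}" and "n - 2 \<notin> z ` hcarrier A"
  shows "same_order A z (\<lambda>a\<in>hcarrier A. hval n j (z a))"
  unfolding same_order_def
proof (intro ballI)
  fix a b assume "a \<in> hcarrier A" "b \<in> hcarrier A"
  then have "z a < n" "z b < n" "z b \<noteq> n - 2"
    using assms(3) homsD(2)[OF z] by (auto simp: image_iff)
  then show "z a \<le> z b \<longleftrightarrow> (\<lambda>a\<in>hcarrier A. hval n j (z a)) a \<le> (\<lambda>a\<in>hcarrier A. hval n j (z a)) b"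
    using \<open>a \<in> hcarrier A\<close> \<open>b \<in> hcarrier A\<close> hval_le_iff[OF j] by auto
qed

lemma ran_card_hval:
  assumes z: "z \<in> homs n A" and A: "is_halg A" and j: "j \<in> {1..n-2}" and n: "n \<ge> 4"
    and "n - 2 \<in> z ` hcarrier A"
  shows "ran_card A z = Suc (ran_card A (\<lambda>a\<in>hcarrier A. hval n j (z a)))"
proof -
  let ?S = "z ` hcarrier A"
  have top: "n - 1 \<in> ?S" using bot_top_in_range(2)[OF z A] .
  have range: "\<forall>u\<in>?S. u < n" using homsD(2)[OF z] by blast
  have merge: "hval n j (n - 1) = hval n j (n - 2)"
    using hval_simps(2)[OF j n] hval_simps(4)[OF j n, of "n - 2"] n by simp
  have "hval n j ` ?S \<subseteq> hval n j ` (?S - {n - 1})"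
  proof
    fix t assume "t \<in> hval n j ` ?S"
    then obtain u where u: "u \<in> ?S" "t = hval n j u" by blast
    show "t \<in> hval n j ` (?S - {n - 1})"
    proof (cases "u = n - 1")
      case True
      have "n - 2 \<in> ?S - {n - 1}" using \<open>n - 2 \<in> ?S\<close> n by auto
      then show ?thesis using u True merge by (metis image_eqI)
    qed (use u in auto)
  qed
  then have "hval n j ` ?S = hval n j ` (?S - {n - 1})" by blast
  moreover have "inj_on (hval n j) (?S - {n - 1})"
    using range unfolding inj_on_def hval_def by auto
  ultimately have "ran_card A (\<lambda>a\<in>hcarrier A. hval n j (z a)) = card (?S - {n - 1})"
    unfolding ran_card_def by (simp add: image_image[symmetric] card_image)
  then show ?thesis
    using top finite_image_homs[OF z] ran_card_bounds(1)[OF z A n] unfolding ran_card_def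
    by (simp add: card_Diff_singleton)
qed

lemma prec_ran_card:
  assumes A: "is_halg A" and \<sigma>: "in_Sigma n \<sigma>" and n: "n \<ge> 4"
    and cd: "(c, d) \<in> prec n A \<sigma>" and x: "x \<in> c" and y: "y \<in> d"
  shows "ran_card A x = Suc (ran_card A y)"
proof -
  obtain z w where zw: "z \<in> c" "w \<in> d" "lift A (\<sigma> (n - 2)) z = Some w"
    and cls: "c \<in> classes n A \<sigma>" "d \<in> classes n A \<sigma>" "c \<noteq> d"
    using cd unfolding prec_def by blast
  obtain j where j: "j \<in> {1..n-2}" "\<sigma> (n - 2) = hmap n j"
    using \<sigma> unfolding in_Sigma_def by blast
  have z: "z \<in> homs n A" and c_def: "c = order_class n A z"
    using mem_classesD[OF A \<sigma> cls(1) zw(1)] by auto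
  have w: "w = (\<lambda>a\<in>hcarrier A. hval n j (z a))" using zw(3) j(2) lift_hmap_homs[OF z] by simp
  have d_def: "d = order_class n A w" using mem_classesD[OF A \<sigma> cls(2) zw(2)] by auto
  have "n - 2 \<in> z ` hcarrier A"
  proof (rule ccontr)
    assume "n - 2 \<notin> z ` hcarrier A"
    then have "same_order A z w" unfolding w by (rule same_order_hval_self[OF z j(1)])
    then have "w \<in> c" using zw(2) d_def c_def unfolding order_class_def by auto
    then show False using cls mem_classesD(2)[OF A \<sigma>] zw(2) by metis
  qed
  then have "ran_card A z = Suc (ran_card A w)" unfolding w by (rule ran_card_hval[OF z A j(1) n])
  moreover have "same_order A z x" "same_order A w y"
    using x y c_def d_def unfolding order_class_def by auto
  then have "ran_card A z = ran_card A x" "ran_card A w = ran_card A y"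
    by (simp_all add: ran_card_eq_if_same_order)
  ultimately show ?thesis by simp
qed

definition class_ran_card :: "'a halg \<Rightarrow> ('a \<Rightarrow> nat) set \<Rightarrow> nat" where
  "class_ran_card A c = ran_card A (SOME x. x \<in> c)"

lemma class_ran_card_eq:
  assumes A: "is_halg A" and \<sigma>: "in_Sigma n \<sigma>" and c: "c \<in> classes n A \<sigma>" and x: "x \<in> c"
  shows "class_ran_card A c = ran_card A x"
proof -
  have "(SOME x. x \<in> c) \<in> order_class n A x"
    using someI[of "\<lambda>x. x \<in> c", OF x] mem_classesD(2)[OF A \<sigma> c x] by simp
  then show ?thesis
    unfolding class_ran_card_def order_class_def by (metis mem_Collect_eq ran_card_eq_if_same_order)
qed

lemma prec_class_ran_card:
  assumes A: "is_halg A" and \<sigma>: "in_Sigma n \<sigma>" and n: "n \<ge> 4" and cd: "(c, d) \<in> prec n A \<sigma>"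
  shows "class_ran_card A c = Suc (class_ran_card A d)"
proof -
  have cls: "c \<in> classes n A \<sigma>" "d \<in> classes n A \<sigma>" using cd unfolding prec_def by auto
  obtain x y where "x \<in> c" "y \<in> d"
    using classes_nonempty[OF A \<sigma> cls(1)] classes_nonempty[OF A \<sigma> cls(2)] by metis
  then show ?thesis
    using prec_ran_card[OF A \<sigma> n cd] class_ran_card_eq[OF A \<sigma> cls(1)]
      class_ran_card_eq[OF A \<sigma> cls(2)] by simp
qed

lemma class_ran_card_bounds:
  assumes A: "is_halg A" and \<sigma>: "in_Sigma n \<sigma>" and n: "n \<ge> 4"
  shows "class_ran_card A ` classes n A \<sigma> \<subseteq> {2..n}"
proof
  fix k assume "k \<in> class_ran_card A ` classes n A \<sigma>"
  then obtain c x where c: "c \<in> classes n A \<sigma>" "k = class_ran_card A c" and x: "x \<in> c"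
    by (metis classes_nonempty[OF A \<sigma>] imageE)
  then show "k \<in> {2..n}"
    using class_ran_card_eq[OF A \<sigma> c(1) x]
      ran_card_bounds[OF mem_classesD(1)[OF A \<sigma> c(1) x] A n] by simp
qed

theorem lemma4p2:
  fixes n :: nat and A :: "'a halg" and \<sigma> \<tau> :: "nat \<Rightarrow> (nat \<Rightarrow> nat option)"
  assumes "n \<ge> 4"
    and "in_Sigma n \<sigma>" and "in_Sigma n \<tau>"
    and "in_Gn TYPE('i) n A"
  shows "simeq n A \<sigma> = simeq n A \<tau> \<and>
         leq n A \<sigma> = leq n A \<tau> \<and>
         partial_order_on (classes n A \<sigma>) (leq n A \<sigma>) \<and>
         depth_le (classes n A \<sigma>) (leq n A \<sigma>) (n - 2) \<and>
         covers (leq n A \<sigma>) = prec n A \<sigma>"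
proof -
  note n = assms(1) and \<sigma> = assms(2) and \<tau> = assms(3)
  have A: "is_halg A" using assms(4) unfolding in_Gn_def by blast
  have "prec n A \<sigma> = prec n A \<tau>" using prec_subset[OF A \<sigma> \<tau> n] prec_subset[OF A \<tau> \<sigma> n] by blast
  then have leq: "leq n A \<sigma> = leq n A \<tau>" unfolding leq_def classes_indep[OF A \<sigma> \<tau>] by simp
  have simeq: "simeq n A \<sigma> = simeq n A \<tau>"
    using simeq_eq_same_order[OF A \<sigma>] simeq_eq_same_order[OF A \<tau>] by simp
  interpret graded_relation "prec n A \<sigma>" "class_ran_card A"
    by unfold_locales (rule prec_class_ran_card[OF A \<sigma> n])
  have "partial_order_on (classes n A \<sigma>) (leq n A \<sigma>)"
    unfolding leq_def by (rule partial_order_on_rtrancl)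
  moreover have "depth_le (classes n A \<sigma>) (leq n A \<sigma>) (n - 2)"
    unfolding leq_def by (rule depth_le_rtrancl[OF class_ran_card_bounds[OF A \<sigma> n]])
  moreover have "covers (leq n A \<sigma>) = prec n A \<sigma>"
    unfolding leq_def by (rule covers_rtrancl) (auto simp: prec_def)
  ultimately show ?thesis using simeq leq by blast
qed

end
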